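(* Let $\mathfrak{h}=\mathfrak{b}\oplus\mathfrak{c}\oplus\mathfrak{r}\oplus\mathfrak{z}$ be an orthogonal direct sum with $\mathfrak{b}$ a subspace of $\mathfrak{a}$, $\mathfrak{c}$ a complex subspace of $\mathfrak{g}_\alpha$, $\mathfrak{r}$ a totally real subspace of $\mathfrak{g}_\alpha$, and $\mathfrak{z}$ a subspace of $\mathfrak{g}_{2\alpha}$ with $[\mathfrak{c},\mathfrak{c}]\subset\mathfrak{z}$. Let $H$ be the connected Lie subgroup of $AN$ with Lie algebra $\mathfrak{h}$. Then each orbit of $H$ on $\mathbb{C}H^n$ can be written as $H\cdot\operatorname{Exp}(X)(o)$ for some $X\in(\mathfrak{a}\oplus\mathfrak{n})\ominus\mathfrak{h}$.
   Context: $\mathbb{C}H^n$ is the complex hyperbolic space of constant holomorphic sectional curvature $-1$; $G=SU(1,n)$, $o\in\mathbb{C}H^n$ fixed with stabilizer $K$, Cartan decomposition $\mathfrak{g}=\mathfrak{k}\oplus\mathfrak{p}$, $\mathfrak{a}\subset\mathfrak{p}$ maximal abelian ($1$-dimensional), restricted roots $\pm\alpha,\pm2\alpha$ with $\alpha,2\alpha$ positive, root spaces $\mathfrak{g}_\lambda$, $\mathfrak{n}=\mathfrak{g}_\alpha\oplus\mathfrak{g}_{2\alpha}$, and $AN$ the connected subgroup with Lie algebra $\mathfrak{a}\oplus\mathfrak{n}$, which acts simply transitively on $\mathbb{C}H^n$. $\mathfrak{a}\oplus\mathfrak{n}$ carries an inner product and complex structure $J$ (with $J\mathfrak{g}_\alpha=\mathfrak{g}_\alpha$,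 $J\mathfrak{a}=\mathfrak{g}_{2\alpha}$) making $AN$ with its left-invariant metric holomorphically isometric to $\mathbb{C}H^n$. The bracket on $\mathfrak{g}_\alpha$ is $[U,V]=\langle JU,V\rangle Z$ with $Z\in\mathfrak{g}_{2\alpha}$. $\operatorname{Exp}$ is the Lie exponential of $AN$; $\ominus$ is orthogonal complement. A subspace $W$ is complex if $JW\subset W$, totally real if $JW\perp W$. *)

theory Defs
  imports "HOL-Analysis.Analysis"
begin

text \<open>Concrete model of the solvable Iwasawa group AN of SU(1,n), n = CARD('m) + 1.
  Lie algebra a + n = a + g_alpha + g_2alpha is modelled as real \<times> complex^'m \<times> real:
  (t, U, x) stands for t B + U + x Z, with B a unit vector spanning a, Z = J B a unit
  vector spanning g_2alpha, g_alpha = complex^'m with J = multiplication by i and the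
  real inner product Re (sum u_k cnj v_k).  Normalisation alpha(B) = 1/2.\<close>

type_synonym ('m) alg = "real \<times> (complex ^ 'm) \<times> real"

definition Jv :: "complex ^ 'm::finite \<Rightarrow> complex ^ 'm" where
  "Jv U = (\<chi> k. \<i> * U $ k)"

definition J :: "'m::finite alg \<Rightarrow> 'm::finite alg" where
  "J X = (case X of (t, U, x) \<Rightarrow> (- x, Jv U, t))"

definition a_sp :: "'m::finite alg set" where "a_sp = {(t, 0, 0) | t. True}"
definition g_alpha :: "'m::finite alg set" where "g_alpha = {(0, U, 0) | U. True}"
definition g_2alpha :: "'m::finite alg set" where "g_2alpha = {(0, 0, x) | x. True}"

text \<open>Lie bracket: [B,U] = U/2, [B,Z] = Z, [U,V] = <JU,V> Z.\<close>
definition bracket :: "'m::finite alg \<Rightarrow> 'm::finite alg \<Rightarrow> 'm::finite alg" where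
  "bracket X Y = (case X of (t, U, x) \<Rightarrow> case Y of (s, V, y) \<Rightarrow>
     (0, (t / 2) *\<^sub>R V - (s / 2) *\<^sub>R U, inner (Jv U) V + t * y - s * x))"

text \<open>The group AN: (t, U, x) stands for Exp(tB) * Exp_N(U + xZ).
  Multiplication (t,n)(s,m) = (t+s, Ad(Exp(-sB)) n * m), with the Heisenberg
  law (U,x)*(V,y) = (U+V, x+y+<JU,V>/2) in exponential coordinates.\<close>
definition mult :: "'m::finite alg \<Rightarrow> 'm::finite alg \<Rightarrow> 'm::finite alg" where
  "mult g h = (case g of (t, U, x) \<Rightarrow> case h of (s, V, y) \<Rightarrow>
     (t + s, exp (- s / 2) *\<^sub>R U + V,
      exp (- s) * x + y + inner (Jv (exp (- s / 2) *\<^sub>R U)) V / 2))"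

definition unit_el :: "'m::finite alg" where "unit_el = (0, 0, 0)"

text \<open>Lie exponential of AN (time-1 value of the one-parameter subgroup with
  initial velocity X), computed explicitly in the above coordinates.\<close>
definition Exp :: "'m::finite alg \<Rightarrow> 'm::finite alg" where
  "Exp X = (case X of (t, U, x) \<Rightarrow>
     if t = 0 then (0, U, x)
     else (t, ((2 / t) * (1 - exp (- t / 2))) *\<^sub>R U, (x / t) * (1 - exp (- t))))"

text \<open>The connected Lie subgroup with Lie algebra h: the subgroup generated by Exp h
  (finite products of exponentials; inverses are exponentials of -X).\<close>
definition conn_subgroup :: "'m::finite alg set \<Rightarrow> 'm::finite alg set" where
  "conn_subgroup h = {foldr mult (map Exp xs) unit_el | xs. set xs \<subseteq> h}"

definition orbit :: "'m::finite alg set \<Rightarrow> 'm::finite alg \<Rightarrow> 'm::finite alg set" where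
  "orbit H p = {mult g p | g. g \<in> H}"

definition ortho_compl :: "'m::finite alg set \<Rightarrow> 'm::finite alg set" where
  "ortho_compl W = {X. \<forall>Y\<in>W. inner X Y = 0}"

definition complex_sub :: "'m::finite alg set \<Rightarrow> bool" where
  "complex_sub W \<longleftrightarrow> J ` W \<subseteq> W"

definition totally_real :: "'m::finite alg set \<Rightarrow> bool" where
  "totally_real W \<longleftrightarrow> (\<forall>u\<in>W. \<forall>v\<in>W. inner (J u) v = 0)"

end

theory Submission
  imports Defs
begin

text \<open>In the coordinates (t, U, x) of AN, left translation by Exp of an element of g_alpha,
  g_2alpha or a shifts the corresponding coordinate of a point by that element (rescaled by a
  positive factor depending on the a-coordinate) and leaves the coordinates normalised earlier
  untouched, provided one treats g_alpha first, then g_2alpha, then a. Since h splits along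
  a + g_alpha + g_2alpha, every H-orbit therefore contains a point each of whose three
  coordinates is orthogonal to the corresponding block of h. Finally Exp only rescales the
  g_alpha- and g_2alpha-coordinates, so this point is Exp X for some X orthogonal to h.\<close>

lemma mult_Pair [simp]:
  "mult (t, U, x) (s, V, y) =
     (t + s, exp (- s / 2) *\<^sub>R U + V, exp (- s) * x + y + inner (Jv (exp (- s / 2) *\<^sub>R U)) V / 2)"
  by (simp add: mult_def)

lemma Jv_add: "Jv (U + V) = Jv U + Jv V"
  by (simp add: Jv_def vec_eq_iff algebra_simps)

lemma Jv_scaleR: "Jv (a *\<^sub>R U) = a *\<^sub>R Jv U"
  by (simp add: Jv_def vec_eq_iff scaleR_conv_of_real algebra_simps)

lemma Jv_zero [simp]: "Jv 0 = 0"
  by (simp add: Jv_def vec_eq_iff)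

lemma Jv_uminus: "Jv (- U) = - Jv U"
  by (simp add: Jv_def vec_eq_iff)

lemma inner_Jv_self [simp]: "inner (Jv U) U = 0"
  by (simp add: Jv_def inner_vec_def inner_complex_def)

lemma mult_assoc: "mult (mult g h) k = mult g (mult h k)"
proof -
  obtain t U x where g: "g = (t, U, x)" by (cases g) auto
  obtain s V y where h: "h = (s, V, y)" by (cases h) auto
  obtain r W w where k: "k = (r, W, w)" by (cases k) auto
  have e: "exp (- (s + r) / 2) = exp (- s / 2) * exp (- r / 2)"
    "exp (- (s + r)) = exp (- s) * exp (- r)"
    "exp (- r) = exp (- r / 2) * exp (- r / 2)"
    by (simp_all add: exp_add [symmetric])
  show ?thesis
    unfolding g h k mult_Pair
    by (simp only: e(1,2) Jv_add Jv_scaleR inner_add_left inner_add_right inner_scaleR_left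
        inner_scaleR_right) (simp add: algebra_simps e(3) add_divide_distrib)
qed

lemma mult_unit_el_left [simp]: "mult unit_el p = p"
  by (cases p) (simp add: unit_el_def)

lemma mult_unit_el_right [simp]: "mult p unit_el = p"
  by (cases p) (simp add: unit_el_def)

lemma Exp_nilpotent [simp]: "Exp (0, U, x) = (0, U, x)"
  by (simp add: Exp_def)

lemma Exp_a_axis [simp]: "Exp (t, 0, 0) = (t, 0, 0)"
  by (simp add: Exp_def)

lemma Exp_uminus_inverse: "mult (Exp (- X)) (Exp X) = unit_el"
proof -
  obtain t U x where X: "X = (t, U, x)" by (cases X) auto
  show ?thesis
  proof (cases "t = 0")
    case True
    then show ?thesis by (simp add: X unit_el_def Jv_uminus)
  next
    case False
    have e: "exp (- t / 2) * exp (t / 2) = 1" "exp (- t) * exp t = 1"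
      by (simp_all add: exp_add [symmetric])
    define a where "a = (2 / t) * (1 - exp (- t / 2))"
    define b where "b = (1 / t) * (1 - exp (- t))"
    have "Exp X = (t, a *\<^sub>R U, b * x)"
      using False by (simp add: X Exp_def a_def b_def)
    moreover have "Exp (- X) = (- t, (exp (t / 2) * a) *\<^sub>R (- U), exp t * b * (- x))"
      using False e by (simp add: X Exp_def a_def b_def field_simps)
        (metis minus_diff_eq minus_divide_left scaleR_minus_left)
    ultimately show ?thesis
      using e by (simp add: unit_el_def Jv_scaleR Jv_uminus algebra_simps)
  qed
qed

lemma Exp_preimage_rescaled: "\<exists>\<alpha> \<beta>. Exp (t, \<alpha> *\<^sub>R W, \<beta> * x) = (t, W, x)"
proof (cases "t = 0")
  case True
  then show ?thesis by (intro exI [of _ 1]) simp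
next
  case False
  then have "1 - exp (- t / 2) \<noteq> 0" "1 - exp (- t) \<noteq> 0" by simp_all
  with False show ?thesis
    by (intro exI [of _ "t / (2 * (1 - exp (- t / 2)))"] exI [of _ "t / (1 - exp (- t))"])
      (simp add: Exp_def)
qed

lemma foldr_mult_base: "foldr mult gs q = mult (foldr mult gs unit_el) q"
  by (induction gs) (simp_all add: mult_assoc)

lemma conn_subgroup_mult:
  assumes "g \<in> conn_subgroup h" "k \<in> conn_subgroup h"
  shows "mult g k \<in> conn_subgroup h"
proof -
  obtain xs where xs: "set xs \<subseteq> h" "g = foldr mult (map Exp xs) unit_el"
    using assms(1) unfolding conn_subgroup_def by auto
  obtain ys where ys: "set ys \<subseteq> h" "k = foldr mult (map Exp ys) unit_el"
    using assms(2) unfolding conn_subgroup_def by auto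
  have "mult g k = foldr mult (map Exp (xs @ ys)) unit_el"
    using foldr_mult_base [of "map Exp xs" k] by (simp add: xs(2) ys(2))
  moreover have "set (xs @ ys) \<subseteq> h"
    using xs(1) ys(1) by simp
  ultimately show ?thesis
    unfolding conn_subgroup_def by blast
qed

lemma Exp_in_conn_subgroup: "X \<in> h \<Longrightarrow> Exp X \<in> conn_subgroup h"
  unfolding conn_subgroup_def by (intro CollectI exI [of _ "[X]"]) simp

lemma orbit_mult_Exp:
  assumes "X \<in> h" "- X \<in> h"
  shows "orbit (conn_subgroup h) (mult (Exp X) p) = orbit (conn_subgroup h) p"
proof -
  let ?H = "conn_subgroup h"
  have "mult g (mult (Exp X) p) = mult (mult g (Exp X)) p"
    and "mult g p = mult (mult g (Exp (- X))) (mult (Exp X) p)" for g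
    by (simp_all add: mult_assoc Exp_uminus_inverse flip: mult_assoc [of "Exp (- X)"])
  moreover have "mult g (Exp Y) \<in> ?H" if "g \<in> ?H" "Y \<in> h" for g Y
    using that by (intro conn_subgroup_mult Exp_in_conn_subgroup)
  ultimately show ?thesis
    using assms unfolding orbit_def by blast
qed

lemma orthogonal_decomp_within:
  fixes x :: "'a::euclidean_space"
  assumes "subspace S" "subspace B" "S \<subseteq> B" "x \<in> B"
  obtains u where "u \<in> S" "x - u \<in> B" "\<And>v. v \<in> S \<Longrightarrow> inner (x - u) v = 0"
proof -
  have "span S = S"
    using assms(1) by simp
  then obtain u d where u: "u \<in> S" and "\<And>v. v \<in> S \<Longrightarrow> orthogonal d v" "x = u + d"
    using orthogonal_subspace_decomp_exists [of S x] by metis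
  moreover have "x - u \<in> B"
    using assms u by (blast intro: subspace_diff)
  ultimately show ?thesis
    by (intro that [of u]) (simp_all add: orthogonal_def)
qed

lemma set_of_sums_assoc:
  fixes A B C D :: "'a::semigroup_add set"
  shows "{u + v + w + y | u v w y. u \<in> A \<and> v \<in> B \<and> w \<in> C \<and> y \<in> D} =
    {u + x + y | u x y. u \<in> A \<and> x \<in> {v + w | v w. v \<in> B \<and> w \<in> C} \<and> y \<in> D}"
proof -
  have assoc: "u + v + w + y = u + (v + w) + y" for u v w y :: 'a
    by (simp add: add.assoc)
  show ?thesis
    by (simp only: assoc) blast
qed

lemma subspace_a_sp: "subspace a_sp"
  unfolding subspace_def a_sp_def by (auto simp: zero_prod_def)

lemma subspace_g_alpha: "subspace g_alpha"
  unfolding subspace_def g_alpha_def by (auto simp: zero_prod_def)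

lemma subspace_g_2alpha: "subspace g_2alpha"
  unfolding subspace_def g_2alpha_def by (auto simp: zero_prod_def)

lemma orbit_normalize_g_alpha:
  assumes "subspace w" "w \<subseteq> g_alpha" "w \<subseteq> h"
  obtains W y' where "\<forall>v\<in>w. inner (0, W, 0) v = 0"
    and "orbit (conn_subgroup h) (s, V, y) = orbit (conn_subgroup h) (s, W, y')"
proof -
  have "(0, V, 0) \<in> g_alpha"
    by (simp add: g_alpha_def)
  then obtain u where u: "u \<in> w" "(0, V, 0) - u \<in> g_alpha"
    and orth: "\<And>v. v \<in> w \<Longrightarrow> inner ((0, V, 0) - u) v = 0"
    using orthogonal_decomp_within [OF assms(1) subspace_g_alpha assms(2)] by blast
  obtain U where U: "u = (0, U, 0)"
    using u(1) assms(2) by (auto simp: g_alpha_def)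
  let ?X = "(- exp (s / 2)) *\<^sub>R u"
  have "?X \<in> w"
    using u(1) assms(1) by (rule subspace_scale [rotated])
  then have X: "?X \<in> h" "- ?X \<in> h"
    using assms(1,3) subspace_neg by blast+
  have "exp (- s / 2) * exp (s / 2) = 1"
    by (simp add: exp_add [symmetric])
  then obtain y' where "mult (Exp ?X) (s, V, y) = (s, V - U, y')"
    by (simp add: U)
  then have "orbit (conn_subgroup h) (s, V, y) = orbit (conn_subgroup h) (s, V - U, y')"
    using orbit_mult_Exp [OF X] by metis
  moreover have "\<forall>v\<in>w. inner (0, V - U, 0) v = 0"
    using orth by (simp add: U)
  ultimately show ?thesis
    by (intro that)
qed

lemma orbit_normalize_g_2alpha:
  assumes "subspace z" "z \<subseteq> g_2alpha" "z \<subseteq> h"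
  obtains x' where "\<forall>v\<in>z. inner (0, 0, x') v = 0"
    and "orbit (conn_subgroup h) (s, W, x) = orbit (conn_subgroup h) (s, W, x')"
proof -
  have "(0, 0, x) \<in> g_2alpha"
    by (simp add: g_2alpha_def)
  then obtain u where u: "u \<in> z" "(0, 0, x) - u \<in> g_2alpha"
    and orth: "\<And>v. v \<in> z \<Longrightarrow> inner ((0, 0, x) - u) v = 0"
    using orthogonal_decomp_within [OF assms(1) subspace_g_2alpha assms(2)] by blast
  obtain \<xi> where \<xi>: "u = (0, 0, \<xi>)"
    using u(1) assms(2) by (auto simp: g_2alpha_def)
  let ?X = "(- exp s) *\<^sub>R u"
  have "?X \<in> z"
    using u(1) assms(1) by (rule subspace_scale [rotated])
  then have X: "?X \<in> h" "- ?X \<in> h"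
    using assms(1,3) subspace_neg by blast+
  have "exp (- s) * exp s = 1"
    by (simp add: exp_add [symmetric])
  then have "mult (Exp ?X) (s, W, x) = (s, W, x - \<xi>)"
    by (simp add: \<xi> mult.assoc [symmetric])
  then have "orbit (conn_subgroup h) (s, W, x) = orbit (conn_subgroup h) (s, W, x - \<xi>)"
    using orbit_mult_Exp [OF X] by metis
  moreover have "\<forall>v\<in>z. inner (0, 0, x - \<xi>) v = 0"
    using orth by (simp add: \<xi>)
  ultimately show ?thesis
    by (intro that)
qed

lemma orbit_normalize_a_sp:
  assumes "subspace b" "b \<subseteq> a_sp" "b \<subseteq> h"
  obtains t where "\<forall>v\<in>b. inner (t, 0, 0) v = 0"
    and "orbit (conn_subgroup h) (s, W, x) = orbit (conn_subgroup h) (t, W, x)"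
proof -
  have "(s, 0, 0) \<in> a_sp"
    by (simp add: a_sp_def)
  then obtain u where u: "u \<in> b" "(s, 0, 0) - u \<in> a_sp"
    and orth: "\<And>v. v \<in> b \<Longrightarrow> inner ((s, 0, 0) - u) v = 0"
    using orthogonal_decomp_within [OF assms(1) subspace_a_sp assms(2)] by blast
  obtain \<tau> where \<tau>: "u = (\<tau>, 0, 0)"
    using u(1) assms(2) by (auto simp: a_sp_def)
  have X: "- u \<in> h" "- (- u) \<in> h"
    using u(1) assms(1,3) subspace_neg by auto
  have "mult (Exp (- u)) (s, W, x) = (s - \<tau>, W, x)"
    by (simp add: \<tau>)
  then have "orbit (conn_subgroup h) (s, W, x) = orbit (conn_subgroup h) (s - \<tau>, W, x)"
    using orbit_mult_Exp [OF X] by metis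
  moreover have "\<forall>v\<in>b. inner (s - \<tau>, 0, 0) v = 0"
    using orth by (simp add: \<tau> zero_prod_def)
  ultimately show ?thesis
    by (intro that)
qed

lemma rescaled_in_ortho_compl_block_sum:
  assumes "b \<subseteq> a_sp" "w \<subseteq> g_alpha" "z \<subseteq> g_2alpha"
    and "\<forall>u\<in>b. inner (t, 0, 0) u = 0" "\<forall>v\<in>w. inner (0, W, 0) v = 0"
    and "\<forall>y\<in>z. inner (0, 0, x) y = 0"
  shows "(t, \<alpha> *\<^sub>R W, \<beta> * x) \<in> ortho_compl {u + v + y | u v y. u \<in> b \<and> v \<in> w \<and> y \<in> z}"
proof -
  have "inner (t, \<alpha> *\<^sub>R W, \<beta> * x) (u + v + y) = 0"
    if uvy: "u \<in> b" "v \<in> w" "y \<in> z" for u v y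
  proof -
    obtain a where a: "u = (a, 0, 0)"
      using uvy(1) assms(1) by (auto simp: a_sp_def)
    obtain U where U: "v = (0, U, 0)"
      using uvy(2) assms(2) by (auto simp: g_alpha_def)
    obtain \<xi> where \<xi>: "y = (0, 0, \<xi>)"
      using uvy(3) assms(3) by (auto simp: g_2alpha_def)
    have "inner (t, 0, 0) u = 0" "inner (0, W, 0) v = 0" "inner (0, 0, x) y = 0"
      using uvy assms(4-6) by blast+
    then show ?thesis
      by (auto simp: a U \<xi>)
  qed
  then show ?thesis
    unfolding ortho_compl_def by blast
qed

lemma orbit_meets_Exp_ortho_compl:
  assumes "subspace b" "b \<subseteq> a_sp" "subspace w" "w \<subseteq> g_alpha" "subspace z" "z \<subseteq> g_2alpha"
    and h: "h = {u + v + y | u v y. u \<in> b \<and> v \<in> w \<and> y \<in> z}"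
  shows "\<exists>X \<in> ortho_compl h. orbit (conn_subgroup h) p = orbit (conn_subgroup h) (Exp X)"
proof -
  have sum_in_h: "u + v + y \<in> h" if "u \<in> b" "v \<in> w" "y \<in> z" for u v y
    using that unfolding h by blast
  have "0 \<in> b" "0 \<in> w" "0 \<in> z"
    using assms(1,3,5) by (simp_all add: subspace_0)
  then have "b \<subseteq> h" "w \<subseteq> h" "z \<subseteq> h"
    using sum_in_h [of _ 0 0] sum_in_h [of 0 _ 0] sum_in_h [of 0 0] by auto
  obtain s V y where p: "p = (s, V, y)"
    by (cases p) auto
  obtain W y' where W: "\<forall>v\<in>w. inner (0, W, 0) v = 0"
    and "orbit (conn_subgroup h) p = orbit (conn_subgroup h) (s, W, y')"
    using orbit_normalize_g_alpha [OF assms(3,4) \<open>w \<subseteq> h\<close>] p by metis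
  moreover obtain x where x: "\<forall>v\<in>z. inner (0, 0, x) v = 0"
    and "orbit (conn_subgroup h) (s, W, y') = orbit (conn_subgroup h) (s, W, x)"
    using orbit_normalize_g_2alpha [OF assms(5,6) \<open>z \<subseteq> h\<close>] by metis
  moreover obtain t where t: "\<forall>v\<in>b. inner (t, 0, 0) v = 0"
    and "orbit (conn_subgroup h) (s, W, x) = orbit (conn_subgroup h) (t, W, x)"
    using orbit_normalize_a_sp [OF assms(1,2) \<open>b \<subseteq> h\<close>] by metis
  moreover obtain \<alpha> \<beta> where "Exp (t, \<alpha> *\<^sub>R W, \<beta> * x) = (t, W, x)"
    using Exp_preimage_rescaled by blast
  moreover have "(t, \<alpha> *\<^sub>R W, \<beta> * x) \<in> ortho_compl h"
    unfolding h using assms(2,4,6) t W x by (rule rescaled_in_ortho_compl_block_sum)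
  ultimately show ?thesis
    by metis
qed

theorem lemma3p2:
  fixes b c r z :: "'m::finite alg set"
  assumes "subspace b" "b \<subseteq> a_sp"
    and "subspace c" "c \<subseteq> g_alpha" "complex_sub c"
    and "subspace r" "r \<subseteq> g_alpha" "totally_real r"
    and "subspace z" "z \<subseteq> g_2alpha"
    and "\<forall>u\<in>b. \<forall>v\<in>c \<union> r \<union> z. inner u v = 0"
    and "\<forall>u\<in>c. \<forall>v\<in>r \<union> z. inner u v = 0"
    and "\<forall>u\<in>r. \<forall>v\<in>z. inner u v = 0"
    and "\<forall>u\<in>c. \<forall>v\<in>c. bracket u v \<in> z"
    and "h = {u + v + w + y | u v w y. u \<in> b \<and> v \<in> c \<and> w \<in> r \<and> y \<in> z}"
  shows "\<forall>p. \<exists>X \<in> ortho_compl h. orbit (conn_subgroup h) p = orbit (conn_subgroup h) (Exp X)"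
proof
  fix p
  have "span c = c" "span r = r"
    using assms(3,6) by simp_all
  then have cr: "span (c \<union> r) = {v + w | v w. v \<in> c \<and> w \<in> r}"
    by (simp only: span_Un)
  have "span (c \<union> r) \<subseteq> g_alpha"
    using assms(4,7) by (intro span_minimal) (simp_all add: subspace_g_alpha)
  moreover have "h = {u + x + y | u x y. u \<in> b \<and> x \<in> span (c \<union> r) \<and> y \<in> z}"
    unfolding assms(15) cr by (rule set_of_sums_assoc)
  ultimately show "\<exists>X \<in> ortho_compl h. orbit (conn_subgroup h) p = orbit (conn_subgroup h) (Exp X)"
    using orbit_meets_Exp_ortho_compl [OF assms(1,2) subspace_span _ assms(9,10)] by blast
qed

end
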